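(* Let $G$ be a finite group, $m\ge2$, $H$ a normal subgroup of $G$ of exponent $m-1$, and $K$ a normal subgroup of $G$ such that $G=HK$ and $M(G,H,K)$ is trivial. If $d^\wedge_m(H,K)=\frac{2p-1}{p^2}$ for some prime $p$, then $p$ divides $|G|$. If moreover $p$ is the smallest prime divisor of $|G|$, then $|H:C_H(K)|=|K:C_K(H)|=p$, and hence $H\ne K$. In particular, if $d^\wedge_m(H,K)=\frac34$, then $|H:C_H(K)|=|K:C_K(H)|=2$.
   Context: All groups are finite; ${}^g x=gxg^{-1}$, $[x,y]=xyx^{-1}y^{-1}$. For normal subgroups $H,K$ of $G$, $H\wedge K$ is the group generated by symbols $h\wedge k$ ($h\in H,k\in K$) subject to $hh'\wedge k=({}^h h'\wedge {}^h k)(h\wedge k)$, $h\wedge kk'=(h\wedge k)({}^k h\wedge {}^k k')$, $y\wedge y=1$ for $y\in H\cap K$; $M(G,H,K)$ is the kernel of the epimorphism $H\wedge K\to[H,K]$, $h\wedge k\mapsto[h,k]$. $d^\wedge_m(H,K)=|\{(h,k)\in H\times K:h^m\wedge k=1\}|/(|H||K|)$. $C_H(K)=\{h\in H: hk=kh\ \forall k\in K\}$ and $C_K(H)$ analogously. *)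

theory Defs
  imports "HOL-Algebra.Algebra"
begin

definition conj_by :: "('a, 'b) monoid_scheme \<Rightarrow> 'a \<Rightarrow> 'a \<Rightarrow> 'a" where
  "conj_by G g x = g \<otimes>\<^bsub>G\<^esub> x \<otimes>\<^bsub>G\<^esub> inv\<^bsub>G\<^esub> g"

definition commutator :: "('a, 'b) monoid_scheme \<Rightarrow> 'a \<Rightarrow> 'a \<Rightarrow> 'a" where
  "commutator G x y = x \<otimes>\<^bsub>G\<^esub> y \<otimes>\<^bsub>G\<^esub> inv\<^bsub>G\<^esub> x \<otimes>\<^bsub>G\<^esub> inv\<^bsub>G\<^esub> y"

text \<open>The nonabelian exterior product H \<and> K as a group given by a presentation.
  A word is a list of letters ((h,k), b), standing for the generator h \<and> k (b = True)
  or its inverse (b = False).  ext_eq is the congruence on words generated by free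
  reduction and the defining relations.\<close>

type_synonym 'a ext_word = "(('a \<times> 'a) \<times> bool) list"

inductive ext_eq :: "('a, 'b) monoid_scheme \<Rightarrow> 'a set \<Rightarrow> 'a set \<Rightarrow> 'a ext_word \<Rightarrow> 'a ext_word \<Rightarrow> bool"
  for G H K where
  ext_refl: "ext_eq G H K w w"
| ext_sym: "ext_eq G H K u v \<Longrightarrow> ext_eq G H K v u"
| ext_trans: "ext_eq G H K u v \<Longrightarrow> ext_eq G H K v w \<Longrightarrow> ext_eq G H K u w"
| ext_cong: "ext_eq G H K u v \<Longrightarrow> ext_eq G H K (a @ u @ b) (a @ v @ b)"
| ext_free: "x \<in> H \<times> K \<Longrightarrow> ext_eq G H K [(x, b), (x, \<not> b)] []"
| ext_rel1: "h \<in> H \<Longrightarrow> h' \<in> H \<Longrightarrow> k \<in> K \<Longrightarrow>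
    ext_eq G H K [((h \<otimes>\<^bsub>G\<^esub> h', k), True)]
      [((conj_by G h h', conj_by G h k), True), ((h, k), True)]"
| ext_rel2: "h \<in> H \<Longrightarrow> k \<in> K \<Longrightarrow> k' \<in> K \<Longrightarrow>
    ext_eq G H K [((h, k \<otimes>\<^bsub>G\<^esub> k'), True)]
      [((h, k), True), ((conj_by G k h, conj_by G k k'), True)]"
| ext_rel3: "y \<in> H \<inter> K \<Longrightarrow> ext_eq G H K [((y, y), True)] []"

definition ext_class :: "('a, 'b) monoid_scheme \<Rightarrow> 'a set \<Rightarrow> 'a set \<Rightarrow> 'a ext_word \<Rightarrow> 'a ext_word set" where
  "ext_class G H K w = {v. ext_eq G H K w v}"

definition ext_prod :: "('a, 'b) monoid_scheme \<Rightarrow> 'a set \<Rightarrow> 'a set \<Rightarrow> 'a ext_word set monoid" where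
  "ext_prod G H K =
    \<lparr> carrier = ext_class G H K ` lists ((H \<times> K) \<times> UNIV),
      monoid.mult = (\<lambda>A B. \<Union>u\<in>A. \<Union>v\<in>B. ext_class G H K (u @ v)),
      monoid.one = ext_class G H K [] \<rparr>"

definition ext_wedge :: "('a, 'b) monoid_scheme \<Rightarrow> 'a set \<Rightarrow> 'a set \<Rightarrow> 'a \<Rightarrow> 'a \<Rightarrow> 'a ext_word set" where
  "ext_wedge G H K h k = ext_class G H K [((h, k), True)]"

text \<open>Evaluation of a word under h \<and> k \<mapsto> [h,k]; this induces the epimorphism
  H \<and> K \<rightarrow> [H,K].\<close>
fun ext_eval :: "('a, 'b) monoid_scheme \<Rightarrow> 'a ext_word \<Rightarrow> 'a" where
  "ext_eval G [] = \<one>\<^bsub>G\<^esub>"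
| "ext_eval G (((h, k), b) # w) =
     (if b then commutator G h k else inv\<^bsub>G\<^esub> (commutator G h k)) \<otimes>\<^bsub>G\<^esub> ext_eval G w"

text \<open>M(G,H,K): the kernel of H \<and> K \<rightarrow> [H,K].\<close>
definition ext_M :: "('a, 'b) monoid_scheme \<Rightarrow> 'a set \<Rightarrow> 'a set \<Rightarrow> 'a ext_word set set" where
  "ext_M G H K = {A \<in> carrier (ext_prod G H K). \<exists>w\<in>A. ext_eval G w = \<one>\<^bsub>G\<^esub>}"

definition d_wedge :: "('a, 'b) monoid_scheme \<Rightarrow> nat \<Rightarrow> 'a set \<Rightarrow> 'a set \<Rightarrow> real" where
  "d_wedge G m H K =
     real (card {(h, k) \<in> H \<times> K. ext_wedge G H K (h [^]\<^bsub>G\<^esub> m) k = \<one>\<^bsub>ext_prod G H K\<^esub>})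
       / (real (card H) * real (card K))"

definition subgroup_exponent :: "('a, 'b) monoid_scheme \<Rightarrow> 'a set \<Rightarrow> nat" where
  "subgroup_exponent G H = (LEAST n. 0 < n \<and> (\<forall>x\<in>H. x [^]\<^bsub>G\<^esub> n = \<one>\<^bsub>G\<^esub>))"

definition centralizer_in :: "('a, 'b) monoid_scheme \<Rightarrow> 'a set \<Rightarrow> 'a set \<Rightarrow> 'a set" where
  "centralizer_in G H K = {h \<in> H. \<forall>k\<in>K. h \<otimes>\<^bsub>G\<^esub> k = k \<otimes>\<^bsub>G\<^esub> h}"

definition sub_index :: "('a, 'b) monoid_scheme \<Rightarrow> 'a set \<Rightarrow> 'a set \<Rightarrow> nat" where
  "sub_index G H C = card {C #>\<^bsub>G\<^esub> h | h. h \<in> H}"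

end

theory Submission
  imports Defs
begin

(* Under the hypothesis that M(G,H,K) is trivial, h \<and> k = 1 holds exactly when
   [h,k] = 1, because the relations of H \<and> K are respected by the evaluation h \<and> k \<mapsto> [h,k].
   Since H has exponent m - 1 we have h^m = h on H, so d^\<and>_m(H,K) is the proportion T/(|H||K|)
   of commuting pairs (h,k) \<in> H \<times> K.  Counting these pairs row by row, T = \<Sum>_{h\<in>H} |C_K(h)|,
   where |C_K(h)| = |K| for h \<in> C_H(K) and |C_K(h)| \<le> |K|/p otherwise, because every proper
   subgroup has index at least the smallest prime p dividing |G|.  Comparing with
   p^2 T = (2p-1)|H||K| forces |H| = p |C_H(K)|; by symmetry |K| = p |C_K(H)|.  Finally H = K
   is impossible: the centre of a nonabelian group never has index p (the centralizer of a
   non-central element lies strictly between them). *)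

section \<open>Commutators and the defining relations of the exterior product\<close>

lemma (in group) commutator_closed [simp]:
  "h \<in> carrier G \<Longrightarrow> k \<in> carrier G \<Longrightarrow> commutator G h k \<in> carrier G"
  by (simp add: commutator_def)

lemma (in group) conj_by_closed [simp]:
  "g \<in> carrier G \<Longrightarrow> x \<in> carrier G \<Longrightarrow> conj_by G g x \<in> carrier G"
  by (simp add: conj_by_def)

lemma (in group) commutator_eq_one_iff:
  assumes "h \<in> carrier G" "k \<in> carrier G"
  shows "commutator G h k = \<one> \<longleftrightarrow> h \<otimes> k = k \<otimes> h"
proof -
  have "commutator G h k = (h \<otimes> k) \<otimes> inv (k \<otimes> h)"
    using assms by (simp add: commutator_def inv_mult_group m_assoc)
  then show ?thesis
    using assms by (metis inv_closed m_closed r_inv inv_equality inv_inv)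
qed

lemma (in group) mult_inv_cancel_left:
  "x \<in> carrier G \<Longrightarrow> y \<in> carrier G \<Longrightarrow> x \<otimes> (inv x \<otimes> y) = y"
  by (simp add: m_assoc[symmetric])

lemma (in group) inv_mult_cancel_left:
  "x \<in> carrier G \<Longrightarrow> y \<in> carrier G \<Longrightarrow> inv x \<otimes> (x \<otimes> y) = y"
  by (simp add: m_assoc[symmetric])

text \<open>The commutator identities corresponding to the first two defining relations of H \<and> K:
  [hh',k] = [{}^h h', {}^h k][h,k] and [h,kk'] = [h,k][{}^k h, {}^k k'].\<close>
lemma (in group) commutator_mult_left:
  assumes "h \<in> carrier G" "h' \<in> carrier G" "k \<in> carrier G"
  shows "commutator G (h \<otimes> h') k
           = commutator G (conj_by G h h') (conj_by G h k) \<otimes> commutator G h k"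
  using assms
  by (simp add: commutator_def conj_by_def m_assoc inv_mult_group
      mult_inv_cancel_left inv_mult_cancel_left)

lemma (in group) commutator_mult_right:
  assumes "h \<in> carrier G" "k \<in> carrier G" "k' \<in> carrier G"
  shows "commutator G h (k \<otimes> k')
           = commutator G h k \<otimes> commutator G (conj_by G k h) (conj_by G k k')"
  using assms
  by (simp add: commutator_def conj_by_def m_assoc inv_mult_group
      mult_inv_cancel_left inv_mult_cancel_left)

abbreviation letters :: "('a, 'b) monoid_scheme \<Rightarrow> (('a \<times> 'a) \<times> bool) set" where
  "letters G \<equiv> (carrier G \<times> carrier G) \<times> UNIV"

lemma (in group) ext_eval_closed: "set u \<subseteq> letters G \<Longrightarrow> ext_eval G u \<in> carrier G"
  by (induction u) auto

lemma (in group) ext_eval_append: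
  "set u \<subseteq> letters G \<Longrightarrow> set v \<subseteq> letters G \<Longrightarrow> ext_eval G (u @ v) = ext_eval G u \<otimes> ext_eval G v"
  by (induction u) (auto simp: ext_eval_closed m_assoc)

text \<open>Equivalent words evaluate to the same element: the evaluation h \<and> k \<mapsto> [h,k] is well
  defined on H \<and> K.  Being a word over the carrier is carried along as part of the invariant.\<close>
lemma (in group) ext_eq_preserves_eval:
  assumes "H \<subseteq> carrier G" "K \<subseteq> carrier G"
    and "ext_eq G H K u v"
  shows "(set u \<subseteq> letters G \<longleftrightarrow> set v \<subseteq> letters G)
     \<and> (set u \<subseteq> letters G \<longrightarrow> ext_eval G u = ext_eval G v)"
  using assms(3)
proof (induction rule: ext_eq.induct)
  case (ext_cong u v a b)
  then show ?case
    by (auto simp: ext_eval_append ext_eval_closed)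
next
  case (ext_free x b)
  then show ?case
    using assms by (cases x; cases b) auto
next
  case (ext_rel1 h h' k)
  then have "h \<in> carrier G" "h' \<in> carrier G" "k \<in> carrier G" using assms by auto
  then show ?case by (simp add: commutator_mult_left)
next
  case (ext_rel2 h k k')
  then have "h \<in> carrier G" "k \<in> carrier G" "k' \<in> carrier G" using assms by auto
  then show ?case by (simp add: commutator_mult_right)
next
  case (ext_rel3 y)
  then have "y \<in> carrier G" using assms by auto
  then show ?case by (simp add: commutator_def m_assoc)
qed auto

lemma (in group) ext_wedge_trivial_iff_commute:
  assumes H: "H \<subseteq> carrier G" and K: "K \<subseteq> carrier G"
    and M: "ext_M G H K = {\<one>\<^bsub>ext_prod G H K\<^esub>}" and h: "h \<in> H" and k: "k \<in> K"
  shows "ext_wedge G H K h k = \<one>\<^bsub>ext_prod G H K\<^esub> \<longleftrightarrow> h \<otimes> k = k \<otimes> h"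
proof -
  have hG: "h \<in> carrier G" and kG: "k \<in> carrier G" using H K h k by auto
  have one: "\<one>\<^bsub>ext_prod G H K\<^esub> = ext_class G H K []" by (simp add: ext_prod_def)
  have eval: "ext_eval G [((h, k), True)] = commutator G h k" using hG kG by simp
  show ?thesis
  proof
    assume "ext_wedge G H K h k = \<one>\<^bsub>ext_prod G H K\<^esub>"
    then have "ext_eq G H K [((h, k), True)] []"
      by (metis ext_wedge_def one ext_class_def mem_Collect_eq ext_refl)
    then have "commutator G h k = \<one>"
      using ext_eq_preserves_eval[OF H K] eval hG kG by fastforce
    then show "h \<otimes> k = k \<otimes> h" using commutator_eq_one_iff hG kG by blast
  next
    assume "h \<otimes> k = k \<otimes> h"
    then have "ext_eval G [((h, k), True)] = \<one>"
      using eval commutator_eq_one_iff[OF hG kG] by simp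
    moreover have "ext_wedge G H K h k \<in> carrier (ext_prod G H K)"
      using h k by (auto simp: ext_prod_def ext_wedge_def)
    moreover have "[((h, k), True)] \<in> ext_wedge G H K h k"
      by (simp add: ext_wedge_def ext_class_def ext_refl)
    ultimately have "ext_wedge G H K h k \<in> ext_M G H K"
      unfolding ext_M_def by blast
    then show "ext_wedge G H K h k = \<one>\<^bsub>ext_prod G H K\<^esub>" using M by blast
  qed
qed

lemma (in group) pow_exponent_Suc:
  assumes fin: "finite (carrier G)" and H: "H \<subseteq> carrier G" and h: "h \<in> H"
  shows "h [^] Suc (subgroup_exponent G H) = h"
proof -
  let ?kills = "\<lambda>n. 0 < n \<and> (\<forall>x\<in>H. x [^] n = \<one>)"
  have "?kills (order G)" using fin H pow_order_eq_1 order_gt_0_iff_finite by blast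
  then have "?kills (subgroup_exponent G H)" unfolding subgroup_exponent_def by (rule LeastI)
  then show ?thesis using h H by (metis nat_pow_Suc l_one subsetD)
qed

section \<open>Centralizers and indices\<close>

lemma (in group) centralizer_in_subgroup:
  assumes H: "subgroup H G" and K: "K \<subseteq> carrier G"
  shows "subgroup (centralizer_in G H K) G"
proof (rule subgroupI)
  have HG: "H \<subseteq> carrier G" using H subgroup.subset by blast
  show "centralizer_in G H K \<subseteq> carrier G" using HG by (auto simp: centralizer_in_def)
  have "\<one> \<in> centralizer_in G H K"
    using K subgroup.one_closed[OF H] by (auto simp: centralizer_in_def subset_iff)
  then show "centralizer_in G H K \<noteq> {}" by blast
next
  fix a b assume a: "a \<in> centralizer_in G H K" and b: "b \<in> centralizer_in G H K"
  have HG: "H \<subseteq> carrier G" using H subgroup.subset by blast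
  have aG: "a \<in> carrier G" and bG: "b \<in> carrier G" using a b HG by (auto simp: centralizer_in_def)
  have "inv a \<otimes> k = k \<otimes> inv a" if k: "k \<in> K" for k
  proof -
    have kG: "k \<in> carrier G" using k K by auto
    have "k \<otimes> inv a = inv a \<otimes> (a \<otimes> k) \<otimes> inv a" using aG kG by (simp add: m_assoc[symmetric])
    also have "\<dots> = inv a \<otimes> (k \<otimes> a) \<otimes> inv a" using a k by (simp add: centralizer_in_def)
    also have "\<dots> = inv a \<otimes> k" using aG kG by (simp add: m_assoc)
    finally show ?thesis by simp
  qed
  then show "inv a \<in> centralizer_in G H K"
    using a subgroup.m_inv_closed[OF H] by (auto simp: centralizer_in_def)
  have "a \<otimes> b \<otimes> k = k \<otimes> (a \<otimes> b)" if k: "k \<in> K" for k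
  proof -
    have kG: "k \<in> carrier G" using k K by auto
    have "a \<otimes> b \<otimes> k = a \<otimes> (k \<otimes> b)" using aG bG kG b k by (simp add: m_assoc centralizer_in_def)
    also have "\<dots> = k \<otimes> a \<otimes> b" using aG bG kG a k by (simp add: m_assoc[symmetric] centralizer_in_def)
    finally show ?thesis using aG bG kG by (simp add: m_assoc)
  qed
  then show "a \<otimes> b \<in> centralizer_in G H K"
    using a b subgroup.m_closed[OF H] by (auto simp: centralizer_in_def)
qed

lemma (in group) sub_index_mult_card:
  assumes A: "subgroup A G" and B: "subgroup B G" and BA: "B \<subseteq> A"
  shows "sub_index G A B * card B = card A"
proof -
  interpret A: group "G\<lparr>carrier := A\<rparr>" using subgroup_imp_group A by blast
  have "subgroup B (G\<lparr>carrier := A\<rparr>)" using subgroup_incl A B BA by blast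
  from A.lagrange[OF this] have "card (rcosets\<^bsub>G\<lparr>carrier := A\<rparr>\<^esub> B) * card B = card A"
    by (simp add: order_def)
  moreover have "rcosets\<^bsub>G\<lparr>carrier := A\<rparr>\<^esub> B = {B #> h | h. h \<in> A}"
    by (auto simp: RCOSETS_def r_coset_def)
  ultimately show ?thesis by (simp add: sub_index_def)
qed

lemma (in group) sub_index_eq_of_card:
  assumes fin: "finite (carrier G)" and A: "subgroup A G" and B: "subgroup B G"
    and BA: "B \<subseteq> A" and card_A: "card A = p * card B"
  shows "sub_index G A B = p"
proof -
  have "finite B" using B fin subgroup.subset finite_subset by blast
  then have "card B > 0" using subgroup.one_closed[OF B] card_gt_0_iff by blast
  then show ?thesis using sub_index_mult_card[OF A B BA] card_A by simp
qed

lemma (in group) proper_subgroup_card_bound: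
  assumes fin: "finite (carrier G)" and A: "subgroup A G" and B: "subgroup B G"
    and BA: "B \<subseteq> A" "B \<noteq> A"
    and pmin: "\<forall>q::nat. Factorial_Ring.prime q \<longrightarrow> q dvd order G \<longrightarrow> p \<le> q"
  shows "p * card B \<le> card A"
proof -
  let ?i = "sub_index G A B"
  have index: "?i * card B = card A" using sub_index_mult_card A B BA(1) by blast
  have finA: "finite A" using A fin subgroup.subset finite_subset by blast
  then have "card B \<noteq> card A" using card_subset_eq BA by blast
  then have "?i \<noteq> 1" using index by auto
  then obtain q where q: "Factorial_Ring.prime q" "q dvd ?i" using prime_factor_nat by blast
  have "card A > 0" using finA subgroup.one_closed[OF A] card_gt_0_iff by blast
  then have "?i > 0" using index by (metis gr0I mult_0)
  moreover have "?i dvd order G" using index lagrange[OF A] by (metis dvd_mult_left dvd_triv_right)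
  ultimately have "p \<le> ?i" using pmin q by (meson dvd_imp_le dvd_trans le_trans)
  then show ?thesis using index by (metis mult_le_mono1)
qed

lemma centralizer_in_singleton_eq_iff:
  "h \<in> H \<Longrightarrow> centralizer_in G K {h} = K \<longleftrightarrow> h \<in> centralizer_in G H K"
  unfolding centralizer_in_def by (auto simp: set_eq_iff) metis

text \<open>The centre of a group never has index p, p the smallest prime dividing |G|: for h outside
  the centre Z, the centralizer C_H(h) is a proper subgroup strictly containing Z.\<close>
lemma (in group) center_index_ne_smallest_prime:
  assumes fin: "finite (carrier G)" and H: "subgroup H G"
    and p: "Factorial_Ring.prime p"
    and pmin: "\<forall>q::nat. Factorial_Ring.prime q \<longrightarrow> q dvd order G \<longrightarrow> p \<le> q"
  shows "card H \<noteq> p * card (centralizer_in G H H)"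
proof
  let ?Z = "centralizer_in G H H"
  assume card_H: "card H = p * card ?Z"
  have HG: "H \<subseteq> carrier G" using H subgroup.subset by blast
  have finH: "finite H" using HG fin finite_subset by blast
  have "card H > 0" using finH subgroup.one_closed[OF H] card_gt_0_iff by blast
  have "?Z \<noteq> H"
  proof
    assume "?Z = H"
    then have "card H = p * card H" using card_H by simp
    then show False using \<open>card H > 0\<close> prime_gt_1_nat[OF p] by simp
  qed
  moreover have "?Z \<subseteq> H" by (auto simp: centralizer_in_def)
  ultimately obtain h where h: "h \<in> H" "h \<notin> ?Z" by blast
  let ?D = "centralizer_in G H {h}"
  have D: "subgroup ?D G" using centralizer_in_subgroup H h HG by blast
  have DH: "?D \<subseteq> H" by (auto simp: centralizer_in_def)
  have "?D \<noteq> H" using h centralizer_in_singleton_eq_iff[of h H G H] by blast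
  then have "p * card ?D \<le> card H" using proper_subgroup_card_bound[OF fin H D DH _ pmin] by blast
  moreover have "card ?Z < card ?D"
  proof (rule psubset_card_mono)
    show "finite ?D" using finite_subset[OF DH finH] .
    have "?Z \<subseteq> ?D" using h by (auto simp: centralizer_in_def)
    moreover have "h \<in> ?D" using h by (simp add: centralizer_in_def)
    ultimately show "?Z \<subset> ?D" using h by blast
  qed
  ultimately have "p * card ?Z < card H" using prime_gt_0_nat[OF p] by (meson mult_less_mono2 less_le_trans)
  then show False using card_H by simp
qed

section \<open>Counting commuting pairs\<close>

definition commuting_pairs :: "('a, 'b) monoid_scheme \<Rightarrow> 'a set \<Rightarrow> 'a set \<Rightarrow> ('a \<times> 'a) set" where
  "commuting_pairs G H K = {(h, k) \<in> H \<times> K. h \<otimes>\<^bsub>G\<^esub> k = k \<otimes>\<^bsub>G\<^esub> h}"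

lemma card_commuting_pairs_swap:
  "card (commuting_pairs G K H) = card (commuting_pairs G H K)"
proof -
  have "commuting_pairs G K H = prod.swap ` commuting_pairs G H K"
    by (auto simp: commuting_pairs_def image_iff)
  then show ?thesis by (simp add: card_image)
qed

lemma card_commuting_pairs_sum:
  assumes "finite H" "finite K"
  shows "card (commuting_pairs G H K) = (\<Sum>h\<in>H. card (centralizer_in G K {h}))"
proof -
  have "commuting_pairs G H K = Sigma H (\<lambda>h. centralizer_in G K {h})"
    by (auto simp: commuting_pairs_def centralizer_in_def)
  then show ?thesis using assms by (simp add: centralizer_in_def)
qed

text \<open>Rows indexed by C_H(K) contribute |K|, the other rows at most |K|/p.\<close>
lemma (in group) card_commuting_pairs_bound:
  assumes fin: "finite (carrier G)" and H: "subgroup H G" and K: "subgroup K G"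
    and pmin: "\<forall>q::nat. Factorial_Ring.prime q \<longrightarrow> q dvd order G \<longrightarrow> p \<le> q"
  shows "p * card (commuting_pairs G H K)
           \<le> p * card (centralizer_in G H K) * card K + (card H - card (centralizer_in G H K)) * card K"
proof -
  let ?C = "centralizer_in G H K"
  let ?CK = "\<lambda>h. centralizer_in G K {h}"
  have HG: "H \<subseteq> carrier G" and KG: "K \<subseteq> carrier G" using H K subgroup.subset by auto
  have finH: "finite H" and finK: "finite K" using HG KG fin finite_subset by auto
  have CH: "?C \<subseteq> H" by (auto simp: centralizer_in_def)
  have central_row: "p * card (?CK h) = p * card K" if "h \<in> ?C" for h
    using that CH centralizer_in_singleton_eq_iff by (metis subsetD)
  have other_row: "p * card (?CK h) \<le> card K" if h: "h \<in> H - ?C" for h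
  proof (rule proper_subgroup_card_bound[OF fin K _ _ _ pmin])
    show "subgroup (?CK h) G" using centralizer_in_subgroup K h HG by blast
    show "?CK h \<subseteq> K" by (auto simp: centralizer_in_def)
    show "?CK h \<noteq> K" using h centralizer_in_singleton_eq_iff[of h H G K] by blast
  qed
  have "p * card (commuting_pairs G H K) = (\<Sum>h\<in>H. p * card (?CK h))"
    using card_commuting_pairs_sum[OF finH finK, of G] by (simp add: sum_distrib_left)
  also have "\<dots> = (\<Sum>h\<in>H - ?C. p * card (?CK h)) + (\<Sum>h\<in>?C. p * card (?CK h))"
    by (rule sum.subset_diff[OF CH finH])
  also have "\<dots> \<le> (\<Sum>h\<in>H - ?C. card K) + (\<Sum>h\<in>?C. p * card K)"
    using other_row central_row by (intro add_mono sum_mono) auto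
  also have "\<dots> = (card H - card ?C) * card K + card ?C * p * card K"
    using finH CH by (simp add: card_Diff_subset finite_subset)
  finally show ?thesis by (simp add: ac_simps)
qed

lemma density_forces_small_index:
  fixes T n c s p :: nat
  assumes p: "p \<ge> 2" and s: "s > 0" and cn: "c \<le> n"
    and bound: "p * T \<le> p * c * s + (n - c) * s" and density: "p^2 * T = (2 * p - 1) * n * s"
  shows "n \<le> p * c"
proof -
  have "(2 * p - 1) * n * s \<le> (p * (p * c) + p * (n - c)) * s"
    using mult_le_mono2[OF bound, of p] density by (simp add: power2_eq_square algebra_simps)
  then have "(2 * p - 1) * n \<le> p * (p * c) + p * (n - c)" using s by simp
  then have "int ((2 * p - 1) * n) \<le> int (p * (p * c) + p * (n - c))" by linarith
  then have "(2 * int p - 1) * int n \<le> int p * (int p * int c) + int p * (int n - int c)"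
    using p cn by simp
  then have "(int p - 1) * int n \<le> (int p - 1) * (int p * int c)"
    by (simp add: algebra_simps)
  then show ?thesis using p by (simp add: mult_le_cancel_left flip: of_nat_mult)
qed

lemma (in group) density_forces_index_p:
  assumes fin: "finite (carrier G)" and H: "subgroup H G" and K: "subgroup K G"
    and p: "Factorial_Ring.prime p"
    and pmin: "\<forall>q::nat. Factorial_Ring.prime q \<longrightarrow> q dvd order G \<longrightarrow> p \<le> q"
    and density: "p^2 * card (commuting_pairs G H K) = (2 * p - 1) * card H * card K"
  shows "card H = p * card (centralizer_in G H K)"
proof -
  let ?C = "centralizer_in G H K"
  have HG: "H \<subseteq> carrier G" and KG: "K \<subseteq> carrier G" using H K subgroup.subset by auto
  have finH: "finite H" and finK: "finite K" using HG KG fin finite_subset by auto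
  have nH: "card H > 0" and nK: "card K > 0"
    using finH finK subgroup.one_closed[OF H] subgroup.one_closed[OF K] card_gt_0_iff by blast+
  have p2: "p \<ge> 2" using p prime_ge_2_nat by blast
  have CH: "?C \<subseteq> H" by (auto simp: centralizer_in_def)
  have "card H \<le> p * card ?C"
    using density_forces_small_index[OF p2 nK card_mono[OF finH CH]
        card_commuting_pairs_bound[OF fin H K pmin] density] .
  moreover have "?C \<noteq> H"
  proof
    assume "?C = H"
    then have "\<forall>h\<in>H. centralizer_in G K {h} = K" by (simp add: centralizer_in_singleton_eq_iff)
    then have "card (commuting_pairs G H K) = card H * card K"
      using card_commuting_pairs_sum[OF finH finK, of G] by simp
    then have "p^2 = 2 * p - 1" using density nH nK by (simp add: mult.assoc)
    moreover have "p^2 \<ge> 2 * p" using p2 by (simp add: power2_eq_square)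
    ultimately show False using p2 by linarith
  qed
  then have "p * card ?C \<le> card H"
    using proper_subgroup_card_bound[OF fin H centralizer_in_subgroup[OF H KG] CH _ pmin] by blast
  ultimately show ?thesis by simp
qed

section \<open>The exterior degree\<close>

lemma (in group) d_wedge_eq_commuting_density:
  assumes fin: "finite (carrier G)" and H: "H \<subseteq> carrier G" and K: "K \<subseteq> carrier G"
    and exponent: "subgroup_exponent G H = m - 1" and m: "m \<ge> 2"
    and M: "ext_M G H K = {\<one>\<^bsub>ext_prod G H K\<^esub>}"
  shows "d_wedge G m H K = real (card (commuting_pairs G H K)) / (real (card H) * real (card K))"
proof -
  have "h [^] m = h" if "h \<in> H" for h
    using pow_exponent_Suc[OF fin H that] exponent m by (simp add: Suc_diff_le)
  then have "ext_wedge G H K (h [^] m) k = \<one>\<^bsub>ext_prod G H K\<^esub> \<longleftrightarrow> h \<otimes> k = k \<otimes> h"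
    if "h \<in> H" "k \<in> K" for h k
    using ext_wedge_trivial_iff_commute[OF H K M that] that by simp
  then have "{(h, k) \<in> H \<times> K. ext_wedge G H K (h [^] m) k = \<one>\<^bsub>ext_prod G H K\<^esub>}
               = commuting_pairs G H K"
    unfolding commuting_pairs_def by blast
  then show ?thesis by (simp add: d_wedge_def)
qed

lemma density_eq_nat:
  fixes T n s p :: nat
  assumes density: "real T / (real n * real s) = (2 * real p - 1) / (real p)^2" and p: "p > 0"
  shows "p^2 * T = (2 * p - 1) * n * s"
proof -
  have "(2 * real p - 1) / (real p)^2 > 0" using p by simp
  then have "real n * real s \<noteq> 0" using density by force
  then have "n > 0" "s > 0" by auto
  then have "real T * (real p)^2 = (2 * real p - 1) * (real n * real s)"
    using density p by (simp add: frac_eq_eq)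
  then have "real (p^2 * T) = real ((2 * p - 1) * n * s)"
    using p by (simp add: algebra_simps)
  then show ?thesis using of_nat_eq_iff by blast
qed

text \<open>p cannot divide 2p - 1, so the density equation makes p divide |H||K|, hence |G|.\<close>
lemma (in group) density_prime_dvd_order:
  assumes H: "subgroup H G" and K: "subgroup K G" and p: "Factorial_Ring.prime p"
    and density: "p^2 * T = (2 * p - 1) * card H * card K"
  shows "p dvd order G"
proof -
  have "p dvd (2 * p - 1) * (card H * card K)"
    using density by (metis dvd_triv_left mult.assoc power2_eq_square)
  moreover have "\<not> p dvd 2 * p - 1"
  proof
    assume "p dvd 2 * p - 1"
    then have "p dvd 2 * p - (2 * p - 1)" using dvd_diff_nat dvd_triv_right by blast
    moreover have "2 * p - (2 * p - 1) = 1" using prime_gt_0_nat[OF p] by simp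
    ultimately show False using p by simp
  qed
  ultimately have "p dvd card H \<or> p dvd card K" using p by (simp add: prime_dvd_mult_iff)
  then show ?thesis using lagrange[OF H] lagrange[OF K] by (metis dvd_mult2 mult.commute)
qed

lemma (in group) commuting_density_consequences:
  assumes fin: "finite (carrier G)" and H: "subgroup H G" and K: "subgroup K G"
    and p: "Factorial_Ring.prime p"
    and density_real: "real (card (commuting_pairs G H K)) / (real (card H) * real (card K))
                         = (2 * real p - 1) / (real p)\<^sup>2"
  shows "p dvd order G \<and>
           ((\<forall>q::nat. Factorial_Ring.prime q \<longrightarrow> q dvd order G \<longrightarrow> p \<le> q) \<longrightarrow>
              sub_index G H (centralizer_in G H K) = p \<and>
              sub_index G K (centralizer_in G K H) = p \<and> H \<noteq> K)"
proof (intro conjI impI)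
  have density: "p^2 * card (commuting_pairs G H K) = (2 * p - 1) * card H * card K"
    using density_eq_nat[OF density_real prime_gt_0_nat[OF p]] .
  show "p dvd order G" using density_prime_dvd_order[OF H K p density] .
  assume pmin: "\<forall>q::nat. Factorial_Ring.prime q \<longrightarrow> q dvd order G \<longrightarrow> p \<le> q"
  have HG: "H \<subseteq> carrier G" and KG: "K \<subseteq> carrier G" using H K subgroup.subset by auto
  have card_H: "card H = p * card (centralizer_in G H K)"
    using density_forces_index_p[OF fin H K p pmin density] .
  have "p^2 * card (commuting_pairs G K H) = (2 * p - 1) * card K * card H"
    unfolding card_commuting_pairs_swap[of G K H] using density by (simp add: ac_simps)
  then have card_K: "card K = p * card (centralizer_in G K H)"
    using density_forces_index_p[OF fin K H p pmin] by blast
  show "sub_index G H (centralizer_in G H K) = p"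
    using sub_index_eq_of_card[OF fin H centralizer_in_subgroup[OF H KG] _ card_H]
    by (auto simp: centralizer_in_def)
  show "sub_index G K (centralizer_in G K H) = p"
    using sub_index_eq_of_card[OF fin K centralizer_in_subgroup[OF K HG] _ card_K]
    by (auto simp: centralizer_in_def)
  show "H \<noteq> K" using center_index_ne_smallest_prime[OF fin H p pmin] card_H by blast
qed

theorem mainTheorem11:
  fixes G :: "('a, 'b) monoid_scheme" and H K :: "'a set" and m :: nat
  assumes "group G" and "finite (carrier G)" and "m \<ge> 2"
    and "H \<lhd> G" and "K \<lhd> G"
    and "subgroup_exponent G H = m - 1"
    and "H <#>\<^bsub>G\<^esub> K = carrier G"
    and "ext_M G H K = {\<one>\<^bsub>ext_prod G H K\<^esub>}"
  shows "(\<forall>p::nat. Factorial_Ring.prime p \<longrightarrow> d_wedge G m H K = (2 * real p - 1) / (real p)\<^sup>2 \<longrightarrow>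
            p dvd order G \<and>
            ((\<forall>q::nat. Factorial_Ring.prime q \<longrightarrow> q dvd order G \<longrightarrow> p \<le> q) \<longrightarrow>
              sub_index G H (centralizer_in G H K) = p \<and>
              sub_index G K (centralizer_in G K H) = p \<and> H \<noteq> K))
      \<and> (d_wedge G m H K = 3 / 4 \<longrightarrow>
            sub_index G H (centralizer_in G H K) = 2 \<and>
            sub_index G K (centralizer_in G K H) = 2)"
proof -
  interpret group G by fact
  have H: "subgroup H G" and K: "subgroup K G" using assms(4,5) normal_imp_subgroup by auto
  have d: "d_wedge G m H K = real (card (commuting_pairs G H K)) / (real (card H) * real (card K))"
    using d_wedge_eq_commuting_density[OF assms(2) subgroup.subset[OF H] subgroup.subset[OF K]
        assms(6,3,8)] .
  note consequences = commuting_density_consequences[OF assms(2) H K, folded d]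
  have "d_wedge G m H K = 3 / 4 \<Longrightarrow> d_wedge G m H K = (2 * real (2::nat) - 1) / (real 2)\<^sup>2"
    by simp
  note two_case = consequences[OF two_is_prime_nat this]
  have "\<forall>q::nat. Factorial_Ring.prime q \<longrightarrow> q dvd order G \<longrightarrow> 2 \<le> q"
    using prime_ge_2_nat by blast
  then show ?thesis using consequences two_case by blast
qed

end
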